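(* Fix $\Gamma z_0\in\mathcal M$. Let $x\in[0,1)$ be irrational with Diophantine exponent $\kappa_x>1$, and let $\{y_n\}_{n\in\mathbb N}$ be positive numbers with $y_n\asymp n^{-\beta}$ for some fixed $2<\beta<2\kappa_x$. Then $$\limsup_{n\to\infty}\frac{\inf_{\Gamma z\in\mathcal R_n(x,y_n)}d_{\mathcal M}(\Gamma z_0,\Gamma z)}{\log n}\ge\min\{2\kappa_x-\beta,\ \beta-2\}.$$
   Context: For $\kappa>0$, $x$ is primitive $n^{-\kappa}$-approximable if there are infinitely many $n\in\mathbb N$ such that some $m\in\mathbb Z$ with $\gcd(m,n)=1$ satisfies $|x-\tfrac mn|<n^{-\kappa-1}$; the Diophantine exponent $\kappa_x$ of an irrational $x$ is the supremum of $\kappa'>0$ for which $x$ is primitive $n^{-\kappa'}$-approximable. $\Gamma=\mathrm{SL}_2(\mathbb Z)$, $\mathcal M=\Gamma\backslash\mathbb H$, $d_{\mathcal M}(\Gamma z_1,\Gamma z_2)=\inf_{\gamma\in\Gamma}d_{\mathbb H}(\gamma z_1,z_2)$ with $d_{\mathbb H}$ the hyperbolic distance. $\mathcal R_n(x,y)=\{\Gamma(x+\tfrac jn+iy):0\le j\le n-1\}$. *)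

theory Defs
  imports "HOL-Analysis.Analysis"
begin

definition upper_half_plane :: "complex set" where
  "upper_half_plane = {z. Im z > 0}"

definition dist_H :: "complex \<Rightarrow> complex \<Rightarrow> real" where
  "dist_H z w = arcosh (1 + (cmod (z - w))^2 / (2 * Im z * Im w))"

definition SL2Z :: "(int \<times> int \<times> int \<times> int) set" where
  "SL2Z = {(a, b, c, d). a * d - b * c = 1}"

fun moebius :: "int \<times> int \<times> int \<times> int \<Rightarrow> complex \<Rightarrow> complex" where
  "moebius (a, b, c, d) z = (of_int a * z + of_int b) / (of_int c * z + of_int d)"

text \<open>Distance on the modular surface, computed on representatives:
  d_M(Gamma z1, Gamma z2) = inf over gamma of d_H(gamma z1, z2).\<close>
definition dist_M :: "complex \<Rightarrow> complex \<Rightarrow> real" where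
  "dist_M z1 z2 = (INF g \<in> SL2Z. dist_H (moebius g z1) z2)"

definition R_reps :: "nat \<Rightarrow> real \<Rightarrow> real \<Rightarrow> complex set" where
  "R_reps n x y = {Complex (x + real j / real n) y | j. j \<le> n - 1}"

definition min_dist_R :: "complex \<Rightarrow> nat \<Rightarrow> real \<Rightarrow> real \<Rightarrow> real" where
  "min_dist_R z0 n x y = (INF z \<in> R_reps n x y. dist_M z0 z)"

definition primitive_approximable :: "real \<Rightarrow> real \<Rightarrow> bool" where
  "primitive_approximable \<kappa> x \<longleftrightarrow>
     infinite {n :: nat. \<exists>m :: int. coprime m (int n) \<and>
                  \<bar>x - real_of_int m / real n\<bar> < real n powr (- \<kappa> - 1)}"

definition dioph_exponent :: "real \<Rightarrow> ereal" where
  "dioph_exponent x = Sup (ereal ` {\<kappa>. \<kappa> > 0 \<and> primitive_approximable \<kappa> x})"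

end

theory Submission
  imports Defs
begin

(* The element of SL2(Z) sending the reduced fraction p/n to the cusp at infinity lifts a
   point x + j/n + iy of R_n(x,y) to height at least y / (n^2 ((x - p/n)^2 + y^2)), whereas
   every point of the orbit of z0 has bounded height. Hyperbolic distance dominates the
   logarithm of the ratio of heights, so d_M(Gamma z0, Gamma z) is at least the logarithm of
   that height minus a constant. When |x - p/n| < n^(-k-1) and y_n is comparable to n^(-beta),
   the height is at least a constant times n^min(beta - 2, 2k - beta); this happens for
   infinitely many n whenever k < kappa_x. *)

lemma SL2Z_iff [simp]: "(a, b, c, d) \<in> SL2Z \<longleftrightarrow> a * d - b * c = 1"
  by (simp add: SL2Z_def)

lemma moebius_denom_nonzero:
  assumes "(a, b, c, d) \<in> SL2Z" "Im z > 0"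
  shows "of_int c * z + of_int d \<noteq> 0"
proof
  assume denom: "of_int c * z + of_int d = 0"
  then have "Im (of_int c * z + of_int d) = 0" by simp
  then have "c = 0" using assms(2) by simp
  with denom assms(1) show False by simp
qed

lemma Im_moebius:
  assumes "(a, b, c, d) \<in> SL2Z"
  shows "Im (moebius (a, b, c, d) z) = Im z / (cmod (of_int c * z + of_int d))\<^sup>2"
proof -
  have "Im (moebius (a, b, c, d) z) = of_int (a * d - b * c) * Im z / (cmod (of_int c * z + of_int d))\<^sup>2"
    by (simp add: Im_divide' algebra_simps)
  with assms show ?thesis by simp
qed

lemma Im_moebius_pos:
  assumes "g \<in> SL2Z" "Im z > 0"
  shows "Im (moebius g z) > 0"
  using assms moebius_denom_nonzero[of _ _ _ _ z] Im_moebius[of _ _ _ _ z]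
  by (cases g) auto

lemma moebius_diff:
  assumes g: "(a, b, c, d) \<in> SL2Z" and "Im u > 0" "Im v > 0"
  shows "moebius (a, b, c, d) u - moebius (a, b, c, d) v
           = (u - v) / ((of_int c * u + of_int d) * (of_int c * v + of_int d))"
proof -
  have "of_int c * u + of_int d \<noteq> 0" "of_int c * v + of_int d \<noteq> 0"
    using moebius_denom_nonzero assms by blast+
  moreover have "of_int a * of_int d - of_int b * of_int c = (1 :: complex)"
    using g by (metis SL2Z_iff of_int_1 of_int_diff of_int_mult)
  then have "(of_int a * u + of_int b) * (of_int c * v + of_int d)
      - (of_int a * v + of_int b) * (of_int c * u + of_int d) = u - v"
    by (simp add: algebra_simps)
  ultimately show ?thesis
    by (simp add: field_simps)
qed

lemma dist_H_moebius:
  assumes g: "g \<in> SL2Z" and u: "Im u > 0" and v: "Im v > 0"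
  shows "dist_H (moebius g u) (moebius g v) = dist_H u v"
proof -
  obtain a b c d where g_eq: "g = (a, b, c, d)" by (cases g)
  define A where "A = cmod (of_int c * u + of_int d)"
  define B where "B = cmod (of_int c * v + of_int d)"
  have "A > 0" "B > 0"
    using moebius_denom_nonzero g u v unfolding A_def B_def g_eq by auto
  moreover have diff: "cmod (moebius g u - moebius g v) = cmod (u - v) / (A * B)"
    using moebius_diff g u v unfolding A_def B_def g_eq by (simp add: norm_divide norm_mult)
  moreover have Im_u: "Im (moebius g u) = Im u / A\<^sup>2" and Im_v: "Im (moebius g v) = Im v / B\<^sup>2"
    using Im_moebius g unfolding A_def B_def g_eq by blast+
  ultimately have "(cmod (moebius g u - moebius g v))\<^sup>2 / (2 * Im (moebius g u) * Im (moebius g v))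
      = (cmod (u - v))\<^sup>2 / (2 * Im u * Im v)"
    unfolding diff Im_u Im_v using u v by (simp add: field_simps power2_eq_square)
  then show ?thesis
    unfolding dist_H_def by simp
qed

fun sl2_mult :: "int \<times> int \<times> int \<times> int \<Rightarrow> int \<times> int \<times> int \<times> int \<Rightarrow> int \<times> int \<times> int \<times> int" where
  "sl2_mult (a, b, c, d) (a', b', c', d') =
     (a * a' + b * c', a * b' + b * d', c * a' + d * c', c * b' + d * d')"

lemma sl2_mult_SL2Z:
  assumes "g \<in> SL2Z" "h \<in> SL2Z"
  shows "sl2_mult g h \<in> SL2Z"
proof -
  obtain a b c d a' b' c' d' where "g = (a, b, c, d)" "h = (a', b', c', d')"
    by (cases g, cases h)
  moreover have "(a * a' + b * c') * (c * b' + d * d') - (a * b' + b * d') * (c * a' + d * c')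
      = (a * d - b * c) * (a' * d' - b' * c')"
    by algebra
  ultimately show ?thesis
    using assms by simp
qed

lemma moebius_sl2_mult:
  assumes "h \<in> SL2Z" "Im z > 0"
  shows "moebius (sl2_mult g h) z = moebius g (moebius h z)"
proof -
  obtain a b c d a' b' c' d' where g: "g = (a, b, c, d)" and h: "h = (a', b', c', d')"
    by (cases g, cases h)
  have w: "of_int c' * z + of_int d' \<noteq> 0"
    using moebius_denom_nonzero assms unfolding h by blast
  have "moebius g (moebius h z)
      = ((of_int a * (of_int a' * z + of_int b') + of_int b * (of_int c' * z + of_int d'))
           / (of_int c' * z + of_int d'))
        / ((of_int c * (of_int a' * z + of_int b') + of_int d * (of_int c' * z + of_int d'))
           / (of_int c' * z + of_int d'))"
    unfolding g h using w by (simp add: divide_add_eq_iff)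
  also have "\<dots> = (of_int a * (of_int a' * z + of_int b') + of_int b * (of_int c' * z + of_int d'))
        / (of_int c * (of_int a' * z + of_int b') + of_int d * (of_int c' * z + of_int d'))"
    using w by (simp add: divide_divide_eq_left)
  also have "\<dots> = moebius (sl2_mult g h) z"
    unfolding g h by (simp add: algebra_simps)
  finally show ?thesis ..
qed

lemma min_one_Im_power2_le_cmod_power2:
  fixes c d :: int
  assumes "c \<noteq> 0 \<or> d \<noteq> 0"
  shows "min 1 ((Im z)\<^sup>2) \<le> (cmod (of_int c * z + of_int d))\<^sup>2"
proof -
  have one_le: "1 \<le> (of_int k :: real)\<^sup>2" if "k \<noteq> 0" for k :: int
    using that by (smt (verit) of_int_1_le_iff of_int_power power2_less_eq_zero_iff)
  have cmod_eq: "(cmod (of_int c * z + of_int d))\<^sup>2 = (of_int c * Re z + of_int d)\<^sup>2 + (of_int c * Im z)\<^sup>2"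
    by (simp add: cmod_power2)
  show ?thesis
  proof (cases "c = 0")
    case True
    with assms one_le[of d] show ?thesis
      unfolding cmod_eq by simp
  next
    case False
    then have "(Im z)\<^sup>2 \<le> (of_int c * Im z)\<^sup>2"
      using one_le[of c] by (simp add: power_mult_distrib mult_le_cancel_right1)
    then show ?thesis
      unfolding cmod_eq by (smt (verit) zero_le_power2)
  qed
qed

lemma Im_moebius_le:
  assumes g: "g \<in> SL2Z" and z: "Im z > 0"
  shows "Im (moebius g z) \<le> Im z / min 1 ((Im z)\<^sup>2)"
proof -
  obtain a b c d where g_eq: "g = (a, b, c, d)" by (cases g)
  have "c \<noteq> 0 \<or> d \<noteq> 0"
    using g unfolding g_eq by auto
  then have "min 1 ((Im z)\<^sup>2) \<le> (cmod (of_int c * z + of_int d))\<^sup>2"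
    by (rule min_one_Im_power2_le_cmod_power2)
  moreover have "min 1 ((Im z)\<^sup>2) > 0"
    using z by simp
  ultimately show ?thesis
    using Im_moebius g z unfolding g_eq by (simp add: frac_le)
qed

lemma Im_moebius_ge_at_rational:
  fixes q :: nat and P :: int
  assumes q: "q > 0" and z: "Im z > 0"
  shows "\<exists>g\<in>SL2Z. Im z / ((real q)\<^sup>2 * (cmod (z - of_int P / of_nat q))\<^sup>2) \<le> Im (moebius g z)"
proof -
  obtain a c where Pa: "P = a * gcd P (int q)" and qc: "int q = c * gcd P (int q)"
    and coprime: "coprime a c"
    using gcd_coprime_exists[of P "int q"] q by auto
  have "gcd P (int q) > 0"
    using q by (simp add: le_neq_trans)
  moreover from this have "0 < c"
    using qc q by (metis of_nat_0_less_iff zero_less_mult_pos2)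
  ultimately have c: "0 < c" "c \<le> int q"
    using qc by (smt (verit) mult_le_cancel_left1)+
  obtain u v where bezout: "u * a + v * c = 1"
    using bezout_int[of a c] coprime by (metis coprime_iff_gcd_eq_1)
  \<comment> \<open>This matrix sends the cusp P/q = a/c to infinity.\<close>
  have g: "(- u, - v, c, - a) \<in> SL2Z"
    using bezout by (simp add: algebra_simps)
  have "a * int q = P * c"
    using Pa qc by (metis mult.assoc mult.commute)
  then have "(of_int a :: complex) * of_nat q = of_int P * of_int c"
    by (metis of_int_mult of_int_of_nat_eq)
  then have "(of_int a :: complex) = of_int P * of_int c / of_nat q"
    using q by (simp add: nonzero_eq_divide_eq)
  then have denom: "of_int c * z + of_int (- a) = of_int c * (z - of_int P / of_nat q)"
    by (simp add: algebra_simps)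
  have "Im (z - of_int P / of_nat q) > 0"
    using z by simp
  then have "z - of_int P / of_nat q \<noteq> 0"
    by (metis less_irrefl zero_complex.sel(2))
  then have "Im z / ((real q)\<^sup>2 * (cmod (z - of_int P / of_nat q))\<^sup>2)
      \<le> Im z / ((of_int c)\<^sup>2 * (cmod (z - of_int P / of_nat q))\<^sup>2)"
    using c z by (intro divide_left_mono mult_right_mono power_mono) auto
  also have "\<dots> = Im (moebius (- u, - v, c, - a) z)"
  proof -
    have "cmod (of_int c * z + of_int (- a)) = of_int c * cmod (z - of_int P / of_nat q)"
      unfolding denom norm_mult using c by simp
    then show ?thesis
      unfolding Im_moebius[OF g] by (simp only: power_mult_distrib)
  qed
  finally show ?thesis
    by (rule bexI[OF _ g])
qed

lemma arcosh_ge_ln: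
  fixes t :: real
  assumes "t \<ge> 1"
  shows "ln t \<le> arcosh t"
proof -
  have "ln t \<le> ln (t + sqrt (t\<^sup>2 - 1))"
    using assms by (subst ln_le_cancel_iff) (auto intro: add_pos_nonneg)
  with assms show ?thesis
    by (simp add: arcosh_real_def)
qed

lemma ln_Im_diff_le_dist_H:
  assumes u: "Im u > 0" and v: "Im v > 0"
  shows "ln (Im v) - ln (Im u) - ln 2 \<le> dist_H u v"
proof -
  define t where "t = 1 + (cmod (u - v))\<^sup>2 / (2 * Im u * Im v)"
  have "0 \<le> (cmod (u - v))\<^sup>2 / (2 * Im u * Im v)"
    using u v by (intro divide_nonneg_pos) auto
  then have "t \<ge> 1"
    unfolding t_def by linarith
  have "(Im u - Im v)\<^sup>2 \<le> (cmod (u - v))\<^sup>2"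
    using abs_Im_le_cmod[of "u - v"] by (simp flip: abs_le_square_iff)
  then have "1 + (Im u - Im v)\<^sup>2 / (2 * Im u * Im v) \<le> t"
    unfolding t_def using u v by (intro add_left_mono divide_right_mono) auto
  moreover have "Im v / (2 * Im u) \<le> 1 + (Im u - Im v)\<^sup>2 / (2 * Im u * Im v)"
    using u v by (simp add: field_simps power2_eq_square)
  ultimately have "ln (Im v / (2 * Im u)) \<le> ln t"
    using u v by (intro ln_mono) auto
  also have "\<dots> \<le> dist_H u v"
    unfolding dist_H_def t_def[symmetric] using \<open>t \<ge> 1\<close> by (rule arcosh_ge_ln)
  finally show ?thesis
    using u v by (simp add: ln_div ln_mult)
qed

lemma min_dist_R_ge:
  fixes q :: nat and p :: int
  assumes q: "q > 0" and y: "y > 0" and z0: "Im z0 > 0"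
  shows "ln (y / ((real q)\<^sup>2 * ((x - p / q)\<^sup>2 + y\<^sup>2))) - ln (Im z0 / min 1 ((Im z0)\<^sup>2)) - ln 2
           \<le> min_dist_R z0 q x y"
proof -
  define Y where "Y = y / ((real q)\<^sup>2 * ((x - p / q)\<^sup>2 + y\<^sup>2))"
  define H where "H = Im z0 / min 1 ((Im z0)\<^sup>2)"
  have "Y > 0"
    unfolding Y_def using q y by (simp add: add_nonneg_pos)
  have "R_reps q x y \<noteq> {}"
    unfolding R_reps_def by auto
  moreover have "SL2Z \<noteq> {}"
    using SL2Z_iff[of 1 0 0 1] by force
  ultimately show ?thesis
    unfolding min_dist_R_def dist_M_def Y_def[symmetric] H_def[symmetric]
  proof (intro cINF_greatest)
    fix z g
    assume "z \<in> R_reps q x y" and g: "g \<in> SL2Z"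
    then obtain j where z: "z = Complex (x + real j / real q) y"
      unfolding R_reps_def by auto
    have "(cmod (z - of_int (p + int j) / of_nat q))\<^sup>2 = (x - p / q)\<^sup>2 + y\<^sup>2"
      unfolding z cmod_power2 using q by (simp add: add_divide_distrib diff_divide_distrib)
    then obtain \<gamma> where \<gamma>: "\<gamma> \<in> SL2Z" and Y_le: "Y \<le> Im (moebius \<gamma> z)"
      using Im_moebius_ge_at_rational[OF q, of z "p + int j"] y unfolding Y_def z by auto
    define w where "w = moebius g z0"
    have w: "Im w > 0" and z_pos: "Im z > 0"
      unfolding w_def z using Im_moebius_pos g z0 y by auto
    have "dist_H w z = dist_H (moebius \<gamma> w) (moebius \<gamma> z)"
      using dist_H_moebius \<gamma> w z_pos by simp
    then have "ln (Im (moebius \<gamma> z)) - ln (Im (moebius \<gamma> w)) - ln 2 \<le> dist_H w z"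
      using ln_Im_diff_le_dist_H[OF Im_moebius_pos[OF \<gamma> w] Im_moebius_pos[OF \<gamma> z_pos]] by simp
    moreover have "Im (moebius \<gamma> w) \<le> H"
      unfolding H_def w_def moebius_sl2_mult[OF g z0, symmetric]
      using Im_moebius_le sl2_mult_SL2Z \<gamma> g z0 by blast
    ultimately show "ln Y - ln H - ln 2 \<le> dist_H (moebius g z0) z"
      using Y_le \<open>Y > 0\<close> Im_moebius_pos[OF \<gamma> w] unfolding w_def by (smt (verit) ln_le_cancel_iff)
  qed
qed

lemma height_ge_powr:
  fixes q y d k \<beta> c C :: real
  assumes q: "q \<ge> 1" and y: "y > 0" and c: "c > 0" and C: "C > 0"
    and d: "\<bar>d\<bar> < q powr (- k - 1)"
    and y_lower: "c * q powr (- \<beta>) \<le> y" and y_upper: "y \<le> C * q powr (- \<beta>)"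
  shows "min (1 / (2 * C)) (c / 2) * q powr (min (\<beta> - 2) (2 * k - \<beta>)) \<le> y / (q\<^sup>2 * (d\<^sup>2 + y\<^sup>2))"
proof -
  have q_pos: "q > 0"
    using q by simp
  have q2: "q\<^sup>2 = q powr 2"
    using q_pos by (simp add: powr_numeral)
  have K_pos: "0 < min (1 / (2 * C)) (c / 2)"
    using c C by simp
  have weaken: "min (1 / (2 * C)) (c / 2) * q powr (min (\<beta> - 2) (2 * k - \<beta>)) \<le> A * q powr e"
    if "min (1 / (2 * C)) (c / 2) \<le> A" "min (\<beta> - 2) (2 * k - \<beta>) \<le> e" for A e
  proof (rule mult_mono)
    show "q powr min (\<beta> - 2) (2 * k - \<beta>) \<le> q powr e"
      using that q by (intro powr_mono) auto
    show "0 \<le> A"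
      using that(1) K_pos by linarith
  qed (use that in auto)
  show ?thesis
  proof (cases "d\<^sup>2 \<le> y\<^sup>2")
    case True
    have "1 / (2 * C) * q powr (\<beta> - 2) = 1 / (2 * q\<^sup>2 * (C * q powr (- \<beta>)))"
      unfolding q2 using q_pos by (simp add: powr_diff powr_minus_divide field_simps)
    also have "\<dots> \<le> y / (2 * q\<^sup>2 * y\<^sup>2)"
      using y_upper y q_pos by (simp add: frac_le power2_eq_square)
    also have "\<dots> \<le> y / (q\<^sup>2 * (d\<^sup>2 + y\<^sup>2))"
      using True y q_pos by (intro frac_le) (auto simp: add_nonneg_pos)
    finally show ?thesis
      by (rule order_trans[OF weaken[OF min.cobounded1 min.cobounded1]])
  next
    case False
    then have d_pos: "d\<^sup>2 > 0"
      using y by (smt (verit) zero_le_power2)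
    have "d\<^sup>2 < (q powr (- k - 1))\<^sup>2"
      using d power_strict_mono[of "\<bar>d\<bar>" "q powr (- k - 1)" 2] by simp
    then have d2: "d\<^sup>2 < q powr (- 2 * k - 2)"
      by (simp add: power2_eq_square flip: powr_add)
    have "c / 2 * q powr (2 * k - \<beta>) = c * q powr (- \<beta>) / (2 * q\<^sup>2 * q powr (- 2 * k - 2))"
      unfolding q2 using q_pos by (simp add: powr_diff powr_minus_divide powr_add field_simps)
    also have "\<dots> \<le> y / (2 * q\<^sup>2 * d\<^sup>2)"
      using y_lower d2 d_pos c y q_pos by (intro frac_le) auto
    also have "\<dots> \<le> y / (q\<^sup>2 * (d\<^sup>2 + y\<^sup>2))"
      using False y q_pos by (intro frac_le) (auto simp: add_nonneg_pos)
    finally show ?thesis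
      by (rule order_trans[OF weaken[OF min.cobounded2 min.cobounded2]])
  qed
qed

lemma limsup_div_ln_ge:
  fixes f :: "nat \<Rightarrow> real"
  assumes "infinite {n. m * ln (real n) + D \<le> f n}"
  shows "ereal m \<le> limsup (\<lambda>n. ereal (f n / ln (real n)))"
proof (rule ccontr)
  assume "\<not> ?thesis"
  then have "limsup (\<lambda>n. ereal (f n / ln (real n))) < ereal m"
    by (simp only: not_le)
  from ereal_dense2[OF this] obtain r
    where limsup_less: "limsup (\<lambda>n. ereal (f n / ln (real n))) < ereal r" and "ereal r < ereal m"
    by blast
  have r: "0 < m - r"
    using \<open>ereal r < ereal m\<close> by simp
  have "filterlim (\<lambda>n. ln (real n)) at_top sequentially"
    by (rule filterlim_compose[OF ln_at_top filterlim_real_sequentially])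
  then have "\<forall>\<^sub>F n in sequentially. max 0 (- D / (m - r)) < ln (real n)"
    unfolding filterlim_at_top_dense by (rule spec)
  moreover have "\<forall>\<^sub>F n in sequentially. ereal (f n / ln (real n)) < ereal r"
    using Limsup_lessD[OF limsup_less] .
  ultimately have "\<forall>\<^sub>F n in sequentially. f n < m * ln (real n) + D"
  proof eventually_elim
    case (elim n)
    then have ln_pos: "0 < ln (real n)" and "- D / (m - r) < ln (real n)"
      by auto
    then have "- D < (m - r) * ln (real n)"
      using r by (metis mult.commute pos_divide_less_eq)
    moreover have "f n < r * ln (real n)"
      using elim ln_pos by (simp add: pos_divide_less_eq)
    ultimately show ?case
      by (simp add: algebra_simps)
  qed
  then obtain N where N: "\<And>n. n \<ge> N \<Longrightarrow> f n < m * ln (real n) + D"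
    unfolding eventually_sequentially by blast
  obtain n where "n \<ge> N" "m * ln (real n) + D \<le> f n"
    using assms unfolding infinite_nat_iff_unbounded_le by blast
  then show False
    using N[of n] by linarith
qed

lemma limsup_min_dist_R_ge_of_approximable:
  fixes z0 :: complex and x \<beta> k c C :: real and y :: "nat \<Rightarrow> real"
  assumes z0: "Im z0 > 0" and y_pos: "\<And>n. y n > 0" and c: "c > 0" and C: "C > 0"
    and y_bounds: "\<forall>n\<ge>1. c * real n powr (- \<beta>) \<le> y n \<and> y n \<le> C * real n powr (- \<beta>)"
    and approx: "primitive_approximable k x"
  shows "ereal (min (\<beta> - 2) (2 * k - \<beta>)) \<le> limsup (\<lambda>n. ereal (min_dist_R z0 n x (y n) / ln (real n)))"
proof -
  define K where "K = min (1 / (2 * C)) (c / 2)"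
  define H where "H = Im z0 / min 1 ((Im z0)\<^sup>2)"
  define m where "m = min (\<beta> - 2) (2 * k - \<beta>)"
  have "K > 0"
    unfolding K_def using c C by simp
  have "{n. \<exists>p :: int. coprime p (int n) \<and> \<bar>x - real_of_int p / real n\<bar> < real n powr (- k - 1)}
      \<subseteq> {n. m * ln (real n) + (ln K - ln H - ln 2) \<le> min_dist_R z0 n x (y n)}"
  proof safe
    fix n :: nat and p :: int
    assume approx_n: "\<bar>x - real_of_int p / real n\<bar> < real n powr (- k - 1)"
    then have "n > 0"
      by (cases n) auto
    have "ln K + m * ln (real n) = ln (K * real n powr m)"
      using \<open>K > 0\<close> \<open>n > 0\<close> by (simp add: ln_mult ln_powr)
    also have "\<dots> \<le> ln (y n / ((real n)\<^sup>2 * ((x - p / n)\<^sup>2 + (y n)\<^sup>2)))"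
      using \<open>K > 0\<close> \<open>n > 0\<close> y_bounds unfolding K_def m_def
      by (intro ln_mono height_ge_powr[OF _ y_pos c C approx_n]) auto
    finally have "ln K + m * ln (real n) \<le> ln (y n / ((real n)\<^sup>2 * ((x - p / n)\<^sup>2 + (y n)\<^sup>2)))" .
    with min_dist_R_ge[OF \<open>n > 0\<close> y_pos[of n] z0, where x = x and p = p]
    show "m * ln (real n) + (ln K - ln H - ln 2) \<le> min_dist_R z0 n x (y n)"
      unfolding H_def by linarith
  qed
  then have "infinite {n. m * ln (real n) + (ln K - ln H - ln 2) \<le> min_dist_R z0 n x (y n)}"
    using approx unfolding primitive_approximable_def by (rule infinite_super)
  then show ?thesis
    unfolding m_def by (rule limsup_div_ln_ge)
qed

lemma min_twice_Sup_minus_le: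
  fixes S :: "real set" and \<beta> :: real and L :: ereal
  assumes "\<And>k. k \<in> S \<Longrightarrow> ereal (min (\<beta> - 2) (2 * k - \<beta>)) \<le> L"
  shows "min (2 * Sup (ereal ` S) - ereal \<beta>) (ereal (\<beta> - 2)) \<le> L"
proof (rule dense_le)
  fix w
  assume w: "w < min (2 * Sup (ereal ` S) - ereal \<beta>) (ereal (\<beta> - 2))"
  show "w \<le> L"
  proof (cases w)
    case (real r)
    have "ereal ((r + \<beta>) / 2) < Sup (ereal ` S)"
      using w unfolding real by (cases "Sup (ereal ` S)") auto
    then obtain k where "k \<in> S" and "(r + \<beta>) / 2 < k"
      unfolding less_Sup_iff by auto
    moreover have "r < \<beta> - 2"
      using w unfolding real by simp
    ultimately have "w \<le> ereal (min (\<beta> - 2) (2 * k - \<beta>))"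
      unfolding real by simp
    also have "\<dots> \<le> L"
      using assms \<open>k \<in> S\<close> .
    finally show ?thesis .
  qed (use w in auto)
qed

theorem theorem4p4:
  fixes z0 :: complex and x \<beta> :: real and y :: "nat \<Rightarrow> real"
  assumes z0: "z0 \<in> upper_half_plane"
    and x_range: "0 \<le> x" "x < 1"
    and x_irrat: "x \<notin> \<rat>"
    and kappa_gt1: "dioph_exponent x > 1"
    and y_pos: "\<And>n. y n > 0"
    and y_asymp: "\<exists>c C. c > 0 \<and> C > 0 \<and>
        (\<forall>n\<ge>1. c * real n powr (- \<beta>) \<le> y n \<and> y n \<le> C * real n powr (- \<beta>))"
    and beta_low: "2 < \<beta>"
    and beta_high: "ereal \<beta> < 2 * dioph_exponent x"
  shows "limsup (\<lambda>n. ereal (min_dist_R z0 n x (y n) / ln (real n)))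
           \<ge> min (2 * dioph_exponent x - ereal \<beta>) (ereal (\<beta> - 2))"
proof -
  obtain c C where c: "c > 0" and C: "C > 0"
    and y_bounds: "\<forall>n\<ge>1. c * real n powr (- \<beta>) \<le> y n \<and> y n \<le> C * real n powr (- \<beta>)"
    using y_asymp by blast
  have "Im z0 > 0"
    using z0 unfolding upper_half_plane_def by simp
  then show ?thesis
    unfolding dioph_exponent_def
    by (intro min_twice_Sup_minus_le limsup_min_dist_R_ge_of_approximable[OF _ y_pos c C y_bounds])
      auto
qed

end
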